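(* Assume the structure is rigid. Fix $\zeta=(\xi,\eta)\in\Omega$ and let $Z(z,\zeta):=(y-\eta)-i(z)(x-\xi)$. Then $Z(\cdot,\zeta)$ is invertible in each fiber $A_z$, $z\neq\zeta$, the section $z\mapsto Z(z,\zeta)^{-1}$ is $C^1$ on $\Omega\setminus\{\zeta\}$, and \[ \partial_{\bar z}\bigl(Z(\cdot,\zeta)^{-1}\bigr)=0\quad\text{on }\Omega\setminus\{\zeta\}. \]
   Context: Let $\Omega\subset\mathbb R^2$ be open with coordinates $(x,y)$, and let $\alpha,\beta\in C^1(\Omega,\mathbb R)$ satisfy $\Delta:=4\alpha-\beta^2>0$ on $\Omega$. For $z\in\Omega$ let $A_z:=\mathbb R[X]/(X^2+\beta(z)X+\alpha(z))$ (a commutative real algebra) and let $i=i(z)$ denote the class of $X$, so $i^2+\beta i+\alpha=0$ and $\{1,i(z)\}$ is a real basis of $A_z$. An ($A$-valued) section is $f=u+v\,i$ with $u,v:\Omega\to\mathbb R$; it is $C^k$ if $u,v$ are, and sums/products of sections are taken fiberwise. In each fiber $2i+\beta$ is invertible with $(2i+\beta)^{-1}=(-\beta-2i)/\Delta$. The derivatives of the generator are the sections $i_x:=-(\alpha_x+\beta_x i)(2i+\beta)^{-1}$ and $i_y:=-(\alpha_y+\beta_y i)(2i+\beta)^{-1}$. For a $C^1$ section $f=u+vi$ set $\partial_x f:=u_x+v_x i+v\,i_x$, $\partial_y f:=u_y+v_y i+v\,i_y$, $\partial_{\bar z}f:=\tfrac12(\partial_x f+i\,\partial_y f)$. The structure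 is called rigid if $i_x+i\,i_y=0$ on $\Omega$. *)

theory Defs
  imports "HOL-Analysis.Analysis"
begin

text \<open>An element u + v i of the fiber algebra A_z = R[X]/(X^2 + beta X + alpha)
  is represented by the pair (u,v); a section is a function real \<times> real \<Rightarrow> real \<times> real.\<close>

definition pdx :: "(real \<times> real \<Rightarrow> real) \<Rightarrow> real \<times> real \<Rightarrow> real" where
  "pdx u z = frechet_derivative u (at z) (1, 0)"

definition pdy :: "(real \<times> real \<Rightarrow> real) \<Rightarrow> real \<times> real \<Rightarrow> real" where
  "pdy u z = frechet_derivative u (at z) (0, 1)"

definition C1_on :: "(real \<times> real) set \<Rightarrow> (real \<times> real \<Rightarrow> real) \<Rightarrow> bool" where
  "C1_on S u \<longleftrightarrow> (\<forall>z\<in>S. u differentiable (at z))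
      \<and> continuous_on S (pdx u) \<and> continuous_on S (pdy u)"

definition C1_section_on :: "(real \<times> real) set \<Rightarrow> (real \<times> real \<Rightarrow> real \<times> real) \<Rightarrow> bool" where
  "C1_section_on S f \<longleftrightarrow> C1_on S (\<lambda>z. fst (f z)) \<and> C1_on S (\<lambda>z. snd (f z))"

text \<open>Multiplication in R[X]/(X^2 + b X + a): (p + q i)(r + s i) with i^2 = - b i - a.\<close>
definition amul :: "real \<Rightarrow> real \<Rightarrow> real \<times> real \<Rightarrow> real \<times> real \<Rightarrow> real \<times> real" where
  "amul a b w1 w2 = (case w1 of (p, q) \<Rightarrow> case w2 of (r, s) \<Rightarrow>
       (p * r - a * q * s, p * s + q * r - b * q * s))"

definition ainvertible :: "real \<Rightarrow> real \<Rightarrow> real \<times> real \<Rightarrow> bool" where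
  "ainvertible a b w \<longleftrightarrow> (\<exists>w'. amul a b w w' = (1, 0))"

definition ainv :: "real \<Rightarrow> real \<Rightarrow> real \<times> real \<Rightarrow> real \<times> real" where
  "ainv a b w = (THE w'. amul a b w w' = (1, 0))"

text \<open>(2i + beta)^{-1} = (-beta - 2 i)/Delta, Delta = 4 alpha - beta^2.\<close>
definition inv2ib :: "(real \<times> real \<Rightarrow> real) \<Rightarrow> (real \<times> real \<Rightarrow> real) \<Rightarrow> real \<times> real \<Rightarrow> real \<times> real" where
  "inv2ib \<alpha> \<beta> z = (- \<beta> z / (4 * \<alpha> z - (\<beta> z)^2), - 2 / (4 * \<alpha> z - (\<beta> z)^2))"

text \<open>i_x = -(alpha_x + beta_x i)(2i+beta)^{-1}, i_y likewise.\<close>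
definition gen_x :: "(real \<times> real \<Rightarrow> real) \<Rightarrow> (real \<times> real \<Rightarrow> real) \<Rightarrow> real \<times> real \<Rightarrow> real \<times> real" where
  "gen_x \<alpha> \<beta> z = - amul (\<alpha> z) (\<beta> z) (pdx \<alpha> z, pdx \<beta> z) (inv2ib \<alpha> \<beta> z)"

definition gen_y :: "(real \<times> real \<Rightarrow> real) \<Rightarrow> (real \<times> real \<Rightarrow> real) \<Rightarrow> real \<times> real \<Rightarrow> real \<times> real" where
  "gen_y \<alpha> \<beta> z = - amul (\<alpha> z) (\<beta> z) (pdy \<alpha> z, pdy \<beta> z) (inv2ib \<alpha> \<beta> z)"

text \<open>partial_x f = u_x + v_x i + v i_x, similarly partial_y.\<close>
definition sdx :: "(real \<times> real \<Rightarrow> real) \<Rightarrow> (real \<times> real \<Rightarrow> real) \<Rightarrow> (real \<times> real \<Rightarrow> real \<times> real) \<Rightarrow> real \<times> real \<Rightarrow> real \<times> real" where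
  "sdx \<alpha> \<beta> f z = (pdx (\<lambda>w. fst (f w)) z, pdx (\<lambda>w. snd (f w)) z) + snd (f z) *\<^sub>R gen_x \<alpha> \<beta> z"

definition sdy :: "(real \<times> real \<Rightarrow> real) \<Rightarrow> (real \<times> real \<Rightarrow> real) \<Rightarrow> (real \<times> real \<Rightarrow> real \<times> real) \<Rightarrow> real \<times> real \<Rightarrow> real \<times> real" where
  "sdy \<alpha> \<beta> f z = (pdy (\<lambda>w. fst (f w)) z, pdy (\<lambda>w. snd (f w)) z) + snd (f z) *\<^sub>R gen_y \<alpha> \<beta> z"

definition sdzbar :: "(real \<times> real \<Rightarrow> real) \<Rightarrow> (real \<times> real \<Rightarrow> real) \<Rightarrow> (real \<times> real \<Rightarrow> real \<times> real) \<Rightarrow> real \<times> real \<Rightarrow> real \<times> real" where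
  "sdzbar \<alpha> \<beta> f z = (1/2) *\<^sub>R (sdx \<alpha> \<beta> f z + amul (\<alpha> z) (\<beta> z) (0, 1) (sdy \<alpha> \<beta> f z))"

definition rigid :: "(real \<times> real) set \<Rightarrow> (real \<times> real \<Rightarrow> real) \<Rightarrow> (real \<times> real \<Rightarrow> real) \<Rightarrow> bool" where
  "rigid \<Omega> \<alpha> \<beta> \<longleftrightarrow> (\<forall>z\<in>\<Omega>. gen_x \<alpha> \<beta> z + amul (\<alpha> z) (\<beta> z) (0, 1) (gen_y \<alpha> \<beta> z) = 0)"

definition Zker :: "real \<times> real \<Rightarrow> real \<times> real \<Rightarrow> real \<times> real" where
  "Zker \<zeta> z = (snd z - snd \<zeta>, - (fst z - fst \<zeta>))"

end

theory Submission
  imports Defs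
begin

(* Differentiating i^2 + beta i + alpha = 0 gives i_x (2i + beta) = -(alpha_x + beta_x i), and
   this is exactly what makes the corrected partial derivatives d_x, d_y, hence d_zbar, derivations
   of the algebra of sections.  Since d_x Z = -i - (x - xi) i_x and d_y Z = 1 - (x - xi) i_y, we get
   d_zbar Z = -(x - xi)/2 (i_x + i i_y), which vanishes by rigidity; differentiating Z Z^-1 = 1 then
   gives Z d_zbar (Z^-1) = 0.  Invertibility and C^1 regularity come from the explicit inverse
   (p - beta q - q i)/N of p + q i, where N = p^2 - beta p q + alpha q^2 > 0 for (p,q) /= 0 because
   4 N = (2p - beta q)^2 + (4 alpha - beta^2) q^2. *)

lemma amul_components:
  "amul a b w u = (fst w * fst u - a * snd w * snd u, fst w * snd u + snd w * fst u - b * snd w * snd u)"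
  by (simp add: amul_def split: prod.split)

lemma amul_commute: "amul a b w u = amul a b u w"
  by (simp add: amul_components algebra_simps)

lemma amul_assoc: "amul a b (amul a b w u) v = amul a b w (amul a b u v)"
  by (simp add: amul_components algebra_simps)

lemma amul_one_left [simp]: "amul a b (1, 0) w = w"
  by (simp add: amul_components)

lemma amul_one_right [simp]: "amul a b w (1, 0) = w"
  by (simp add: amul_components)

lemma amul_zero_left [simp]: "amul a b 0 w = 0"
  by (simp add: amul_components zero_prod_def)

lemma amul_zero_right [simp]: "amul a b w 0 = 0"
  by (simp add: amul_components zero_prod_def)

lemma amul_diff_right: "amul a b w (u - v) = amul a b w u - amul a b w v"
  by (simp add: amul_components algebra_simps)

lemma amul_minus_left: "amul a b (- w) u = - amul a b w u"
  by (simp add: amul_components)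

lemma amul_scaleR_right: "amul a b w (c *\<^sub>R u) = c *\<^sub>R amul a b w u"
  by (simp add: amul_components algebra_simps)

lemma amul_scaleR_left: "amul a b (c *\<^sub>R w) u = c *\<^sub>R amul a b w u"
  by (simp add: amul_components algebra_simps)

definition anorm :: "real \<Rightarrow> real \<Rightarrow> real \<times> real \<Rightarrow> real" where
  "anorm a b w = (fst w)\<^sup>2 - b * fst w * snd w + a * (snd w)\<^sup>2"

lemma amul_conj: "amul a b w (fst w - b * snd w, - snd w) = (anorm a b w, 0)"
  by (simp add: amul_components anorm_def algebra_simps power2_eq_square)

lemma anorm_pos:
  assumes "4 * a - b\<^sup>2 > 0" and "w \<noteq> 0"
  shows "anorm a b w > 0"
proof -
  have "4 * anorm a b w = (2 * fst w - b * snd w)\<^sup>2 + (4 * a - b\<^sup>2) * (snd w)\<^sup>2"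
    by (simp add: anorm_def algebra_simps power2_eq_square)
  moreover have "(2 * fst w - b * snd w)\<^sup>2 + (4 * a - b\<^sup>2) * (snd w)\<^sup>2 > 0"
  proof (cases "snd w = 0")
    case True
    with \<open>w \<noteq> 0\<close> have "fst w \<noteq> 0" by (simp add: prod_eq_iff)
    with True show ?thesis by simp
  next
    case False
    with assms(1) show ?thesis by (simp add: add_nonneg_pos)
  qed
  ultimately show ?thesis by simp
qed

lemma ainv_eqI:
  assumes "amul a b w u = (1, 0)"
  shows "ainv a b w = u"
  unfolding ainv_def
proof (rule the_equality)
  fix u' assume "amul a b w u' = (1, 0)"
  then have "u' = amul a b (amul a b u w) u'"
    using assms by (simp add: amul_commute[of a b u])
  also have "\<dots> = u"
    using \<open>amul a b w u' = (1, 0)\<close> by (simp add: amul_assoc)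
  finally show "u' = u" .
qed (fact assms)

lemma amul_ainv: "ainvertible a b w \<Longrightarrow> amul a b w (ainv a b w) = (1, 0)"
  unfolding ainvertible_def using ainv_eqI by blast

lemma ainv_conj:
  assumes "anorm a b w \<noteq> 0"
  shows "ainvertible a b w"
    and "ainv a b w = ((fst w - b * snd w) / anorm a b w, - snd w / anorm a b w)"
proof -
  have "amul a b w ((fst w - b * snd w) / anorm a b w, - snd w / anorm a b w)
      = amul a b w ((1 / anorm a b w) *\<^sub>R (fst w - b * snd w, - snd w))"
    by simp
  also have "\<dots> = (1, 0)"
    unfolding amul_scaleR_right amul_conj using assms by simp
  finally have "amul a b w ((fst w - b * snd w) / anorm a b w, - snd w / anorm a b w) = (1, 0)" .
  then show "ainvertible a b w" and "ainv a b w = ((fst w - b * snd w) / anorm a b w, - snd w / anorm a b w)"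
    unfolding ainvertible_def by (auto intro: ainv_eqI)
qed

lemma amul_inv2ib:
  assumes "4 * \<alpha> z - (\<beta> z)\<^sup>2 \<noteq> 0"
  shows "amul (\<alpha> z) (\<beta> z) (inv2ib \<alpha> \<beta> z) (\<beta> z, 2) = (1, 0)"
proof -
  have "inv2ib \<alpha> \<beta> z = (1 / (4 * \<alpha> z - (\<beta> z)\<^sup>2)) *\<^sub>R (- \<beta> z, - 2)"
    by (simp add: inv2ib_def)
  then have "amul (\<alpha> z) (\<beta> z) (inv2ib \<alpha> \<beta> z) (\<beta> z, 2)
      = (1 / (4 * \<alpha> z - (\<beta> z)\<^sup>2)) *\<^sub>R amul (\<alpha> z) (\<beta> z) (- \<beta> z, - 2) (\<beta> z, 2)"
    by (simp only: amul_scaleR_left)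
  also have "amul (\<alpha> z) (\<beta> z) (- \<beta> z, - 2) (\<beta> z, 2) = (4 * \<alpha> z - (\<beta> z)\<^sup>2, 0)"
    by (simp add: amul_components power2_eq_square)
  finally show ?thesis
    using assms by simp
qed

lemma frechet_derivative_apply:
  "(f has_derivative f') (at z) \<Longrightarrow> frechet_derivative f (at z) h = f' h"
  by (metis frechet_derivative_at)

lemma frechet_derivative_partials:
  fixes u :: "real \<times> real \<Rightarrow> real"
  assumes "u differentiable (at z)"
  shows "frechet_derivative u (at z) h = fst h * pdx u z + snd h * pdy u z"
proof -
  have lin: "linear (frechet_derivative u (at z))"
    using assms by (rule linear_frechet_derivative)
  have "frechet_derivative u (at z) h
      = frechet_derivative u (at z) (fst h *\<^sub>R (1, 0) + snd h *\<^sub>R (0, 1))"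
    by simp
  also have "\<dots> = fst h * pdx u z + snd h * pdy u z"
    unfolding pdx_def pdy_def linear_add[OF lin] linear_scale[OF lin] by simp
  finally show ?thesis .
qed

lemma C1_on_iff_frechet_derivative:
  "C1_on S u \<longleftrightarrow> (\<forall>z\<in>S. u differentiable (at z))
      \<and> (\<forall>h. continuous_on S (\<lambda>z. frechet_derivative u (at z) h))"
proof
  assume C1: "C1_on S u"
  have "continuous_on S (\<lambda>z. frechet_derivative u (at z) h)" for h
  proof (rule continuous_on_cong[THEN iffD2, OF refl])
    show "frechet_derivative u (at z) h = fst h * pdx u z + snd h * pdy u z" if "z \<in> S" for z
      using C1 that by (simp add: C1_on_def frechet_derivative_partials)
    show "continuous_on S (\<lambda>z. fst h * pdx u z + snd h * pdy u z)"
      using C1 unfolding C1_on_def by (intro continuous_intros) auto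
  qed
  with C1 show "(\<forall>z\<in>S. u differentiable (at z))
      \<and> (\<forall>h. continuous_on S (\<lambda>z. frechet_derivative u (at z) h))"
    by (simp add: C1_on_def)
qed (simp add: C1_on_def pdx_def pdy_def)

lemma C1_onI:
  "(\<And>z. z \<in> S \<Longrightarrow> u differentiable (at z))
    \<Longrightarrow> (\<And>h. continuous_on S (\<lambda>z. frechet_derivative u (at z) h)) \<Longrightarrow> C1_on S u"
  unfolding C1_on_iff_frechet_derivative by blast

lemma C1_on_has_derivative:
  "C1_on S u \<Longrightarrow> z \<in> S \<Longrightarrow> (u has_derivative frechet_derivative u (at z)) (at z)"
  unfolding C1_on_def frechet_derivative_works[symmetric] by blast

lemma C1_on_continuous_frechet_derivative:
  "C1_on S u \<Longrightarrow> continuous_on S (\<lambda>z. frechet_derivative u (at z) h)"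
  unfolding C1_on_iff_frechet_derivative by blast

lemma C1_on_imp_continuous_on: "C1_on S u \<Longrightarrow> continuous_on S u"
  unfolding C1_on_def
  by (meson continuous_at_imp_continuous_on differentiable_imp_continuous_within)

lemma C1_on_subset: "C1_on T u \<Longrightarrow> S \<subseteq> T \<Longrightarrow> C1_on S u"
  unfolding C1_on_def by (auto intro: continuous_on_subset)

lemma C1_on_cong:
  assumes "open S" and "\<And>z. z \<in> S \<Longrightarrow> u z = v z" and u: "C1_on S u"
  shows "C1_on S v"
proof (rule C1_onI)
  have v: "(v has_derivative frechet_derivative u (at z)) (at z)" if "z \<in> S" for z
    using has_derivative_transform_within_open[OF C1_on_has_derivative[OF u that]] assms that
    by blast
  then show "v differentiable (at z)" if "z \<in> S" for z
    using that unfolding differentiable_def by blast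
  have "frechet_derivative v (at z) = frechet_derivative u (at z)" if "z \<in> S" for z
    using v[OF that] by (metis frechet_derivative_at)
  then show "continuous_on S (\<lambda>z. frechet_derivative v (at z) h)" for h
    using C1_on_continuous_frechet_derivative[OF u, of h] by (simp cong: continuous_on_cong)
qed

lemma C1_on_const: "C1_on S (\<lambda>z. c)"
  by (rule C1_onI) simp_all

lemma C1_on_fst: "C1_on S fst"
proof (rule C1_onI)
  show "fst differentiable (at z)" for z :: "real \<times> real"
    by (simp add: bounded_linear_imp_differentiable bounded_linear_fst)
  show "continuous_on S (\<lambda>z. frechet_derivative fst (at z) h)" for h
    by (simp add: frechet_derivative_at[OF has_derivative_fst[OF has_derivative_ident], symmetric])
qed

lemma C1_on_snd: "C1_on S snd"
proof (rule C1_onI)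
  show "snd differentiable (at z)" for z :: "real \<times> real"
    by (simp add: bounded_linear_imp_differentiable bounded_linear_snd)
  show "continuous_on S (\<lambda>z. frechet_derivative snd (at z) h)" for h
    by (simp add: frechet_derivative_at[OF has_derivative_snd[OF has_derivative_ident], symmetric])
qed

lemma C1_on_add:
  assumes u: "C1_on S u" and v: "C1_on S v"
  shows "C1_on S (\<lambda>z. u z + v z)"
proof (rule C1_onI)
  show "(\<lambda>z. u z + v z) differentiable (at z)" if "z \<in> S" for z
    using u v that by (simp add: C1_on_def)
  fix h
  have "frechet_derivative (\<lambda>z. u z + v z) (at z) h
      = frechet_derivative u (at z) h + frechet_derivative v (at z) h" if "z \<in> S" for z
    using u v that by (intro frechet_derivative_apply has_derivative_add C1_on_has_derivative)
  then show "continuous_on S (\<lambda>z. frechet_derivative (\<lambda>z. u z + v z) (at z) h)"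
    using u v by (auto cong: continuous_on_cong
      intro!: continuous_intros C1_on_continuous_frechet_derivative)
qed

lemma C1_on_minus:
  assumes u: "C1_on S u"
  shows "C1_on S (\<lambda>z. - u z)"
proof (rule C1_onI)
  show "(\<lambda>z. - u z) differentiable (at z)" if "z \<in> S" for z
    using u that by (simp add: C1_on_def)
  fix h
  have "frechet_derivative (\<lambda>z. - u z) (at z) h = - frechet_derivative u (at z) h" if "z \<in> S" for z
    using u that by (intro frechet_derivative_apply has_derivative_minus C1_on_has_derivative)
  then show "continuous_on S (\<lambda>z. frechet_derivative (\<lambda>z. - u z) (at z) h)"
    using u by (auto cong: continuous_on_cong
      intro!: continuous_intros C1_on_continuous_frechet_derivative)
qed

lemma C1_on_diff:
  assumes u: "C1_on S u" and v: "C1_on S v"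
  shows "C1_on S (\<lambda>z. u z - v z)"
  using C1_on_add[OF u C1_on_minus[OF v]] by simp

lemma C1_on_mult:
  assumes u: "C1_on S u" and v: "C1_on S v"
  shows "C1_on S (\<lambda>z. u z * v z)"
proof (rule C1_onI)
  show "(\<lambda>z. u z * v z) differentiable (at z)" if "z \<in> S" for z
    using u v that by (simp add: C1_on_def)
  fix h
  have "frechet_derivative (\<lambda>z. u z * v z) (at z) h
      = u z * frechet_derivative v (at z) h + frechet_derivative u (at z) h * v z" if "z \<in> S" for z
    using u v that by (intro frechet_derivative_apply has_derivative_mult C1_on_has_derivative)
  then show "continuous_on S (\<lambda>z. frechet_derivative (\<lambda>z. u z * v z) (at z) h)"
    using u v C1_on_imp_continuous_on[OF u] C1_on_imp_continuous_on[OF v]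
    by (auto cong: continuous_on_cong intro!: continuous_intros C1_on_continuous_frechet_derivative)
qed

lemma C1_on_divide:
  assumes u: "C1_on S u" and v: "C1_on S v" and nz: "\<And>z. z \<in> S \<Longrightarrow> v z \<noteq> 0"
  shows "C1_on S (\<lambda>z. u z / v z)"
proof (rule C1_onI)
  show "(\<lambda>z. u z / v z) differentiable (at z)" if "z \<in> S" for z
    using u v nz that by (simp add: C1_on_def)
  fix h
  have "frechet_derivative (\<lambda>z. u z / v z) (at z) h
      = (frechet_derivative u (at z) h * v z - u z * frechet_derivative v (at z) h) / (v z * v z)"
    if "z \<in> S" for z
    using u v nz that by (intro frechet_derivative_apply has_derivative_divide' C1_on_has_derivative)
  then show "continuous_on S (\<lambda>z. frechet_derivative (\<lambda>z. u z / v z) (at z) h)"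
    using u v nz C1_on_imp_continuous_on[OF u] C1_on_imp_continuous_on[OF v]
    by (auto cong: continuous_on_cong intro!: continuous_intros C1_on_continuous_frechet_derivative)
qed

definition gen_dir :: "(real \<times> real \<Rightarrow> real) \<Rightarrow> (real \<times> real \<Rightarrow> real) \<Rightarrow> real \<times> real
    \<Rightarrow> real \<times> real \<Rightarrow> real \<times> real" where
  "gen_dir \<alpha> \<beta> h z = - amul (\<alpha> z) (\<beta> z)
     (frechet_derivative \<alpha> (at z) h, frechet_derivative \<beta> (at z) h) (inv2ib \<alpha> \<beta> z)"

(* sdx and sdy are the instances h = (1,0) and h = (0,1), so the Leibniz rule is proved once for both. *)
definition sderiv :: "(real \<times> real \<Rightarrow> real) \<Rightarrow> (real \<times> real \<Rightarrow> real) \<Rightarrow> real \<times> real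
    \<Rightarrow> (real \<times> real \<Rightarrow> real \<times> real) \<Rightarrow> real \<times> real \<Rightarrow> real \<times> real" where
  "sderiv \<alpha> \<beta> h f z =
     (frechet_derivative (\<lambda>w. fst (f w)) (at z) h, frechet_derivative (\<lambda>w. snd (f w)) (at z) h)
     + snd (f z) *\<^sub>R gen_dir \<alpha> \<beta> h z"

lemma sdzbar_eq_sderiv:
  "sdzbar \<alpha> \<beta> f z
    = (1/2) *\<^sub>R (sderiv \<alpha> \<beta> (1, 0) f z + amul (\<alpha> z) (\<beta> z) (0, 1) (sderiv \<alpha> \<beta> (0, 1) f z))"
  by (simp add: sdzbar_def sdx_def sdy_def sderiv_def gen_x_def gen_y_def gen_dir_def pdx_def pdy_def)

lemma amul_gen_dir:
  assumes "4 * \<alpha> z - (\<beta> z)\<^sup>2 \<noteq> 0"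
  shows "amul (\<alpha> z) (\<beta> z) (gen_dir \<alpha> \<beta> h z) (\<beta> z, 2)
    = - (frechet_derivative \<alpha> (at z) h, frechet_derivative \<beta> (at z) h)"
  unfolding gen_dir_def amul_minus_left amul_assoc
    amul_inv2ib[where \<alpha> = \<alpha> and \<beta> = \<beta> and z = z, OF assms]
  by simp

(* The left side is (u + v i)(r + s i) differentiated componentwise, with G in the role of the
   derivative of i; the hypothesis is the derivative of i^2 + b i + a = 0. *)
lemma amul_leibniz:
  assumes "amul a b G (b, 2) = - (da, db)"
  shows "(du * r + u * dr - (da * v * s + a * (dv * s + v * ds)),
          du * s + u * ds + dv * r + v * dr - (db * v * s + b * (dv * s + v * ds)))
         + (u * s + v * r - b * v * s) *\<^sub>R G
       = amul a b ((du, dv) + v *\<^sub>R G) (r, s) + amul a b (u, v) ((dr, ds) + s *\<^sub>R G)"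
proof -
  obtain g1 g2 where G: "G = (g1, g2)" by fastforce
  with assms have da: "da = 2 * a * g2 - g1 * b" and db: "db = b * g2 - 2 * g1"
    by (simp_all add: amul_components algebra_simps)
  show ?thesis
    unfolding G da db by (simp add: amul_components algebra_simps)
qed

lemma sderiv_amul:
  assumes "4 * \<alpha> z - (\<beta> z)\<^sup>2 \<noteq> 0"
    and "\<alpha> differentiable (at z)" and "\<beta> differentiable (at z)"
    and "(\<lambda>w. fst (f w)) differentiable (at z)" and "(\<lambda>w. snd (f w)) differentiable (at z)"
    and "(\<lambda>w. fst (g w)) differentiable (at z)" and "(\<lambda>w. snd (g w)) differentiable (at z)"
  shows "sderiv \<alpha> \<beta> h (\<lambda>w. amul (\<alpha> w) (\<beta> w) (f w) (g w)) z
    = amul (\<alpha> z) (\<beta> z) (sderiv \<alpha> \<beta> h f z) (g z) + amul (\<alpha> z) (\<beta> z) (f z) (sderiv \<alpha> \<beta> h g z)"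
proof -
  obtain u v r s where f: "f = (\<lambda>w. (u w, v w))" and g: "g = (\<lambda>w. (r w, s w))"
    by (rule that[of "\<lambda>w. fst (f w)" "\<lambda>w. snd (f w)" "\<lambda>w. fst (g w)" "\<lambda>w. snd (g w)"]) simp_all
  let ?D = "\<lambda>u. frechet_derivative u (at z) h"
  from assms(2-) have da: "(\<alpha> has_derivative frechet_derivative \<alpha> (at z)) (at z)"
    and db: "(\<beta> has_derivative frechet_derivative \<beta> (at z)) (at z)"
    and du: "(u has_derivative frechet_derivative u (at z)) (at z)"
    and dv: "(v has_derivative frechet_derivative v (at z)) (at z)"
    and dr: "(r has_derivative frechet_derivative r (at z)) (at z)"
    and ds: "(s has_derivative frechet_derivative s (at z)) (at z)"
    unfolding f g by (simp_all add: frechet_derivative_works)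
  have fst_deriv: "?D (\<lambda>w. u w * r w - \<alpha> w * v w * s w)
      = ?D u * r z + u z * ?D r - (?D \<alpha> * v z * s z + \<alpha> z * (?D v * s z + v z * ?D s))"
    unfolding frechet_derivative_apply[OF has_derivative_diff[OF has_derivative_mult[OF du dr]
          has_derivative_mult[OF has_derivative_mult[OF da dv] ds]]]
    by (simp add: algebra_simps)
  have snd_deriv: "?D (\<lambda>w. u w * s w + v w * r w - \<beta> w * v w * s w)
      = ?D u * s z + u z * ?D s + ?D v * r z + v z * ?D r - (?D \<beta> * v z * s z + \<beta> z * (?D v * s z + v z * ?D s))"
    unfolding frechet_derivative_apply[OF has_derivative_diff[OF has_derivative_add[OF
          has_derivative_mult[OF du ds] has_derivative_mult[OF dv dr]]
          has_derivative_mult[OF has_derivative_mult[OF db dv] ds]]]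
    by (simp add: algebra_simps)
  have "sderiv \<alpha> \<beta> h (\<lambda>w. amul (\<alpha> w) (\<beta> w) (u w, v w) (r w, s w)) z
      = (?D u * r z + u z * ?D r - (?D \<alpha> * v z * s z + \<alpha> z * (?D v * s z + v z * ?D s)),
         ?D u * s z + u z * ?D s + ?D v * r z + v z * ?D r - (?D \<beta> * v z * s z + \<beta> z * (?D v * s z + v z * ?D s)))
        + (u z * s z + v z * r z - \<beta> z * v z * s z) *\<^sub>R gen_dir \<alpha> \<beta> h z"
    using fst_deriv snd_deriv by (simp add: sderiv_def amul_components)
  also have "\<dots> = amul (\<alpha> z) (\<beta> z) ((?D u, ?D v) + v z *\<^sub>R gen_dir \<alpha> \<beta> h z) (r z, s z)
      + amul (\<alpha> z) (\<beta> z) (u z, v z) ((?D r, ?D s) + s z *\<^sub>R gen_dir \<alpha> \<beta> h z)"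
    by (rule amul_leibniz[OF amul_gen_dir[where \<alpha> = \<alpha> and \<beta> = \<beta> and z = z, OF assms(1)]])
  finally show ?thesis
    unfolding f g by (simp add: sderiv_def)
qed

lemma sdzbar_amul:
  assumes "4 * \<alpha> z - (\<beta> z)\<^sup>2 \<noteq> 0"
    and "\<alpha> differentiable (at z)" and "\<beta> differentiable (at z)"
    and "(\<lambda>w. fst (f w)) differentiable (at z)" and "(\<lambda>w. snd (f w)) differentiable (at z)"
    and "(\<lambda>w. fst (g w)) differentiable (at z)" and "(\<lambda>w. snd (g w)) differentiable (at z)"
  shows "sdzbar \<alpha> \<beta> (\<lambda>w. amul (\<alpha> w) (\<beta> w) (f w) (g w)) z
    = amul (\<alpha> z) (\<beta> z) (sdzbar \<alpha> \<beta> f z) (g z) + amul (\<alpha> z) (\<beta> z) (f z) (sdzbar \<alpha> \<beta> g z)"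
  unfolding sdzbar_eq_sderiv sderiv_amul[OF assms]
  by (simp add: amul_components algebra_simps)

lemma sderiv_locally_real_const:
  assumes "open S" and "z \<in> S" and "\<And>w. w \<in> S \<Longrightarrow> F w = (c, 0)"
  shows "sderiv \<alpha> \<beta> h F z = 0"
proof -
  have "frechet_derivative (\<lambda>w. fst (F w)) (at z) = (\<lambda>_. 0)"
    using frechet_derivative_transform_within_open[where f = "\<lambda>w. c" and g = "\<lambda>w. fst (F w)"] assms
    by simp
  moreover have "frechet_derivative (\<lambda>w. snd (F w)) (at z) = (\<lambda>_. 0)"
    using frechet_derivative_transform_within_open[where f = "\<lambda>w. 0" and g = "\<lambda>w. snd (F w)"] assms
    by simp
  ultimately show ?thesis
    using assms(2,3) by (simp add: sderiv_def zero_prod_def)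
qed

lemma sdzbar_amul_inverse_eq_0:
  assumes "open S" and "z \<in> S" and "4 * \<alpha> z - (\<beta> z)\<^sup>2 \<noteq> 0"
    and "\<alpha> differentiable (at z)" and "\<beta> differentiable (at z)"
    and "(\<lambda>w. fst (f w)) differentiable (at z)" and "(\<lambda>w. snd (f w)) differentiable (at z)"
    and "(\<lambda>w. fst (g w)) differentiable (at z)" and "(\<lambda>w. snd (g w)) differentiable (at z)"
    and inverse: "\<And>w. w \<in> S \<Longrightarrow> amul (\<alpha> w) (\<beta> w) (f w) (g w) = (1, 0)"
    and "sdzbar \<alpha> \<beta> f z = 0"
  shows "sdzbar \<alpha> \<beta> g z = 0"
proof -
  have "sdzbar \<alpha> \<beta> (\<lambda>w. amul (\<alpha> w) (\<beta> w) (f w) (g w)) z = 0"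
    unfolding sdzbar_eq_sderiv using assms(1,2) inverse
    by (simp add: sderiv_locally_real_const[of S z])
  then have "amul (\<alpha> z) (\<beta> z) (f z) (sdzbar \<alpha> \<beta> g z) = 0"
    using assms by (simp add: sdzbar_amul)
  then have "amul (\<alpha> z) (\<beta> z) (amul (\<alpha> z) (\<beta> z) (g z) (f z)) (sdzbar \<alpha> \<beta> g z) = 0"
    by (simp add: amul_assoc)
  then show ?thesis
    using inverse[OF assms(2)] by (simp add: amul_commute[of _ _ "g z"])
qed

lemma gen_x_eq_gen_dir: "gen_x \<alpha> \<beta> z = gen_dir \<alpha> \<beta> (1, 0) z"
  by (simp add: gen_x_def gen_dir_def pdx_def)

lemma gen_y_eq_gen_dir: "gen_y \<alpha> \<beta> z = gen_dir \<alpha> \<beta> (0, 1) z"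
  by (simp add: gen_y_def gen_dir_def pdy_def)

lemma sderiv_Zker:
  "sderiv \<alpha> \<beta> h (Zker \<zeta>) z = (snd h, - fst h) - (fst z - fst \<zeta>) *\<^sub>R gen_dir \<alpha> \<beta> h z"
proof -
  have "frechet_derivative (\<lambda>w. snd w - snd \<zeta>) (at z) h = snd h"
    by (rule frechet_derivative_apply) (auto intro!: derivative_eq_intros)
  moreover have "frechet_derivative (\<lambda>w. - (fst w - fst \<zeta>)) (at z) h = - fst h"
    by (rule frechet_derivative_apply) (auto intro!: derivative_eq_intros)
  ultimately show ?thesis
    by (simp add: sderiv_def Zker_def scaleR_diff_left)
qed

lemma sdzbar_Zker_eq_0:
  assumes "rigid \<Omega> \<alpha> \<beta>" and "z \<in> \<Omega>"
  shows "sdzbar \<alpha> \<beta> (Zker \<zeta>) z = 0"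
proof -
  let ?Gx = "gen_dir \<alpha> \<beta> (1, 0) z" and ?Gy = "gen_dir \<alpha> \<beta> (0, 1) z"
  have rigid_z: "?Gx + amul (\<alpha> z) (\<beta> z) (0, 1) ?Gy = 0"
    using assms unfolding rigid_def gen_x_eq_gen_dir gen_y_eq_gen_dir by blast
  have "sdzbar \<alpha> \<beta> (Zker \<zeta>) z
      = (1/2) *\<^sub>R (((0, -1) + amul (\<alpha> z) (\<beta> z) (0, 1) (1, 0))
          - (fst z - fst \<zeta>) *\<^sub>R (?Gx + amul (\<alpha> z) (\<beta> z) (0, 1) ?Gy))"
    unfolding sdzbar_eq_sderiv sderiv_Zker amul_diff_right amul_scaleR_right
    by (simp add: algebra_simps scaleR_add_right scaleR_diff_right)
  also have "\<dots> = 0"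
    unfolding rigid_z by (simp add: amul_components zero_prod_def)
  finally show ?thesis .
qed

lemma C1_section_on_Zker: "C1_section_on S (Zker \<zeta>)"
  unfolding C1_section_on_def Zker_def
  by (auto intro!: C1_on_diff C1_on_minus C1_on_fst C1_on_snd C1_on_const)

lemma C1_section_on_ainv:
  assumes "open S" and "C1_on S \<alpha>" and "C1_on S \<beta>" and "C1_section_on S f"
    and "\<And>z. z \<in> S \<Longrightarrow> anorm (\<alpha> z) (\<beta> z) (f z) \<noteq> 0"
  shows "C1_section_on S (\<lambda>z. ainv (\<alpha> z) (\<beta> z) (f z))"
proof -
  have u: "C1_on S (\<lambda>z. fst (f z))" and v: "C1_on S (\<lambda>z. snd (f z))"
    using assms(4) by (simp_all add: C1_section_on_def)
  have "C1_on S (\<lambda>z. anorm (\<alpha> z) (\<beta> z) (f z))"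
    unfolding anorm_def power2_eq_square
    by (intro C1_on_add C1_on_diff C1_on_mult u v assms(2,3))
  then have "C1_on S (\<lambda>z. (fst (f z) - \<beta> z * snd (f z)) / anorm (\<alpha> z) (\<beta> z) (f z))"
    and "C1_on S (\<lambda>z. - snd (f z) / anorm (\<alpha> z) (\<beta> z) (f z))"
    using assms(5) by (auto intro!: C1_on_divide C1_on_diff C1_on_minus C1_on_mult u v assms(3))
  then show ?thesis
    unfolding C1_section_on_def using assms(1,5)
    by (auto intro: C1_on_cong simp: ainv_conj(2))
qed

theorem lemma5p5:
  fixes \<Omega> :: "(real \<times> real) set" and \<alpha> \<beta> :: "real \<times> real \<Rightarrow> real" and \<zeta> :: "real \<times> real"
  assumes "open \<Omega>"
    and "C1_on \<Omega> \<alpha>" and "C1_on \<Omega> \<beta>"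
    and "\<forall>z\<in>\<Omega>. 4 * \<alpha> z - (\<beta> z)^2 > 0"
    and "rigid \<Omega> \<alpha> \<beta>"
    and "\<zeta> \<in> \<Omega>"
  shows "(\<forall>z\<in>\<Omega> - {\<zeta>}. ainvertible (\<alpha> z) (\<beta> z) (Zker \<zeta> z))
    \<and> C1_section_on (\<Omega> - {\<zeta>}) (\<lambda>z. ainv (\<alpha> z) (\<beta> z) (Zker \<zeta> z))
    \<and> (\<forall>z\<in>\<Omega> - {\<zeta>}. sdzbar \<alpha> \<beta> (\<lambda>w. ainv (\<alpha> w) (\<beta> w) (Zker \<zeta> w)) z = 0)"
proof (intro conjI ballI)
  let ?S = "\<Omega> - {\<zeta>}" and ?Zinv = "\<lambda>w. ainv (\<alpha> w) (\<beta> w) (Zker \<zeta> w)"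
  have S: "open ?S"
    using assms(1) by (simp add: open_Diff)
  have anorm_nonzero: "anorm (\<alpha> z) (\<beta> z) (Zker \<zeta> z) \<noteq> 0" if "z \<in> ?S" for z
    using anorm_pos[of "\<alpha> z" "\<beta> z" "Zker \<zeta> z"] assms(4) that
    by (auto simp: Zker_def prod_eq_iff)
  show invertible: "ainvertible (\<alpha> z) (\<beta> z) (Zker \<zeta> z)" if "z \<in> ?S" for z
    using anorm_nonzero[OF that] by (rule ainv_conj(1))
  show C1: "C1_section_on ?S ?Zinv"
    using assms(2,3) anorm_nonzero
    by (intro C1_section_on_ainv S C1_section_on_Zker) (auto intro: C1_on_subset)
  show "sdzbar \<alpha> \<beta> ?Zinv z = 0" if "z \<in> ?S" for z
  proof (rule sdzbar_amul_inverse_eq_0[OF S that])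
    show "4 * \<alpha> z - (\<beta> z)\<^sup>2 \<noteq> 0"
      using assms(4) that by force
    show "\<alpha> differentiable (at z)" "\<beta> differentiable (at z)"
      using assms(2,3) that by (auto simp: C1_on_def)
    show "(\<lambda>w. fst (Zker \<zeta> w)) differentiable (at z)" "(\<lambda>w. snd (Zker \<zeta> w)) differentiable (at z)"
      using C1_section_on_Zker[of ?S \<zeta>] that by (auto simp: C1_section_on_def C1_on_def)
    show "(\<lambda>w. fst (?Zinv w)) differentiable (at z)" "(\<lambda>w. snd (?Zinv w)) differentiable (at z)"
      using C1 that by (auto simp: C1_section_on_def C1_on_def)
    show "amul (\<alpha> w) (\<beta> w) (Zker \<zeta> w) (?Zinv w) = (1, 0)" if "w \<in> ?S" for w
      using invertible[OF that] by (rule amul_ainv)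
    show "sdzbar \<alpha> \<beta> (Zker \<zeta>) z = 0"
      using assms(5) that by (auto intro: sdzbar_Zker_eq_0)
  qed
qed

end
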